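(* Assume the setting of the context (in particular $u=0$ and $p>k$, so $0<\vartheta<\pi$). Let $X_e=\{(\alpha,r)\in\mathbb R\times\mathbb R_+ : r\cos\alpha\le 1 \text{ or } |\alpha|\ge\pi/2\}$ and, with $\tau(\alpha,r)=(\alpha-\vartheta,r)$, let $X_u=\bigcap_{m\in\mathbb Z}\tau^m(X_e)$. Then $Q_u=(\mathbb C\times X_u)\cap\tilde L$, and every point $(z,\alpha,r)\in Q_u$ satisfies $$r\le \frac{1}{\cos\frac{\vartheta}{2}}.$$
   Context: Let $\tilde L=\{(z,\alpha,r)\in\mathbb C\times\mathbb R\times\mathbb R_{>0} : |z|<r\}$, $L=\{(z,w)\in\mathbb C^2: |z|<|w|\}$, and $\pi:\tilde L\to L$, $\pi(z,\alpha,r)=(z,re^{i\alpha})$ (a universal covering). Equip $\mathbb C^2$ with the real symmetric bilinear form $\langle (z_1,w_1),(z_2,w_2)\rangle=\mathrm{Re}(z_1\bar z_2-w_1\bar w_2)$. Let $G=\{(z,w):|z|^2-|w|^2=-1\}\subset L$, identified with $\mathrm{SU}(1,1)$ via $\begin{pmatrix} w&z\\ \bar z&\bar w\end{pmatrix}\mapsto (z,\bar w)$; then left multiplication by $g\leftrightarrow(z_g,\bar w_g)$ extends to the $\mathbb R$-linear isometry $(z,v)\mapsto (w_g z+z_g v,\ \bar z_g z+\bar w_g v)$ of $\mathbb C^2$ preserving $L$. Let $\tilde G=\{(z,\alpha,r)\in\tilde L: |z|^2=r^2-1\}=\pi^{-1}(G)$, the universal cover $\widetilde{\mathrm{SU}}(1,1)$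 with identity $e=(0,0,1)$; the left action of $G$ on $L$ lifts to a left action of $\tilde G$ on $\tilde L$ extending left multiplication on $\tilde G$. Elements of $\tilde G$ act on the unit disk $\mathbb D$ through $\mathrm{PSU}(1,1)$: $(z,\alpha,r)$ with $w=re^{-i\alpha}$ acts by $\zeta\mapsto (w\zeta+z)/(\bar z\zeta+\bar w)$. For $g\in\tilde G$ with $\bar g=\pi(g)$, let $\bar I_{\bar g}=\{a\in L:\langle \bar g,a\rangle\le -1\}$, $\bar E_{\bar g}=\{a\in L:\langle\bar g,a\rangle=-1\}$; let $I_g$, $E_g$ be the connected components of $\pi^{-1}(\bar I_{\bar g})$, $\pi^{-1}(\bar E_{\bar g})$ containing $g$; $E_g$ separates $\tilde L$ into two components, the closure of one being $I_g$; let $H_g$ be the closure of the other (so $\partial H_g=\partial I_g=E_g$). Let $\Gamma\subset\tilde G$ be a discrete subgroup of finite level $k$ (the index of $\Gamma\cap Z$ in the infinite cyclic centre $Z$ of $\tilde G$), let $\bar\Gamma$ be its image in $\mathrm{PSU}(1,1)$, and let $u\in\mathbb D$ be a point fixed by a nontrivial element of $\bar\Gamma$, with isotropy group $\bar\Gamma_u$ of order $p$. Assume $p>k$ and (after conjugation) $u=0$. Put $\vartheta=\pi k/p$; the isotropy group $\Gamma_u$ is infinite cyclic generated by $r_d=(0,-\vartheta,1)$, which acts by $(z,\alpha,r)\mapsto(ze^{i\vartheta},\alpha-\vartheta,r)$. For $x$ in the orbit $\Gamma(u)$ let $T(x)=\{g\in\Gamma: g(u)=x\}$ and $Q_x=\bigcap_{g\in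 T(x)}H_g$; in particular $T(u)=\Gamma_u$ and $Q_u=\bigcap_{m\in\mathbb Z}H_{r_d^m}$. *)

theory Defs
  imports "HOL-Analysis.Analysis"
begin

text \<open>Points of the covering space are triples (z, alpha, r) :: complex \<times> real \<times> real.\<close>

definition Ltil :: "(complex \<times> real \<times> real) set" where
  "Ltil = {(z, a, r). 0 < r \<and> cmod z < r}"

definition Lset :: "(complex \<times> complex) set" where
  "Lset = {(z, w). cmod z < cmod w}"

definition piL :: "complex \<times> real \<times> real \<Rightarrow> complex \<times> complex" where
  "piL x = (case x of (z, a, r) \<Rightarrow> (z, complex_of_real r * cis a))"

definition bform :: "complex \<times> complex \<Rightarrow> complex \<times> complex \<Rightarrow> real" where
  "bform x y = (case x of (z1, w1) \<Rightarrow> case y of (z2, w2) \<Rightarrow> Re (z1 * cnj z2 - w1 * cnj w2))"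

definition Ibar :: "complex \<times> complex \<Rightarrow> (complex \<times> complex) set" where
  "Ibar gb = {a \<in> Lset. bform gb a \<le> -1}"

definition Ebar :: "complex \<times> complex \<Rightarrow> (complex \<times> complex) set" where
  "Ebar gb = {a \<in> Lset. bform gb a = -1}"

definition Iset :: "complex \<times> real \<times> real \<Rightarrow> (complex \<times> real \<times> real) set" where
  "Iset g = connected_component_set (Ltil \<inter> piL -` Ibar (piL g)) g"

definition Eset :: "complex \<times> real \<times> real \<Rightarrow> (complex \<times> real \<times> real) set" where
  "Eset g = connected_component_set (Ltil \<inter> piL -` Ebar (piL g)) g"

definition Hset :: "complex \<times> real \<times> real \<Rightarrow> (complex \<times> real \<times> real) set" where
  "Hset g = \<Union> {Ltil \<inter> closure C | C. C \<in> components (Ltil - Eset g) \<and> Ltil \<inter> closure C \<noteq> Iset g}"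

definition eG :: "complex \<times> real \<times> real" where
  "eG = (0, 0, 1)"

definition rd_pow :: "real \<Rightarrow> int \<Rightarrow> complex \<times> real \<times> real \<Rightarrow> complex \<times> real \<times> real" where
  "rd_pow th m x = (case x of (z, a, r) \<Rightarrow> (z * cis (of_int m * th), a - of_int m * th, r))"

definition Qu :: "real \<Rightarrow> (complex \<times> real \<times> real) set" where
  "Qu th = (\<Inter>m::int. Hset (rd_pow th m eG))"

definition Xe :: "(real \<times> real) set" where
  "Xe = {(a, r). 0 < r \<and> (r * cos a \<le> 1 \<or> \<bar>a\<bar> \<ge> pi / 2)}"

definition tau_pow :: "real \<Rightarrow> int \<Rightarrow> real \<times> real \<Rightarrow> real \<times> real" where
  "tau_pow th m x = (case x of (a, r) \<Rightarrow> (a - of_int m * th, r))"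

definition Xu :: "real \<Rightarrow> (real \<times> real) set" where
  "Xu th = (\<Inter>m::int. tau_pow th m ` Xe)"

end

theory Submission
  imports Defs
begin

(* For the lift g = (0, -c, 1) of a rotation one computes <g, pi(z, alpha, r)> = -r cos(alpha + c),
   so everything happens in the (alpha, r) half plane, over the branch r = sec(alpha + c),
   |alpha + c| < pi/2, of the secant curve; the z-coordinate only contributes the convex fibre
   |z| < r.  E_g and I_g lie over this branch and over the region above it, the complement of E_g
   consists of the connected regions strictly above and strictly below the branch, and H_g is the
   closure of the lower one: the part of Ltil over {r cos(alpha + c) <= 1 or |alpha + c| >= pi/2},
   a translate of X_e.  Intersecting over c = m theta gives Q_u.  For the bound, some
   alpha + m theta lies in [-theta/2, theta/2], where r cos(alpha + m theta) <= 1 forces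
   r <= 1 / cos(theta/2). *)

lemma connected_component_set_eq_clopen:
  assumes "connected T" "x \<in> T"
    and "openin (top_of_set S) T" "closedin (top_of_set S) T"
  shows "connected_component_set S x = T"
proof
  have "T \<subseteq> S" using assms(3) by (rule openin_imp_subset)
  then show "T \<subseteq> connected_component_set S x"
    using assms(1,2) by (intro connected_component_maximal)
  have "connectedin (top_of_set S) (connected_component_set S x)"
    by (simp add: connectedin_subtopology connected_component_subset)
  then have "connected_component_set S x \<subseteq> T \<or> disjnt (connected_component_set S x) T"
    using assms(3,4) by (intro connectedin_clopen_cases)
  moreover have "x \<in> connected_component_set S x \<inter> T"
    using assms(2) \<open>T \<subseteq> S\<close> by auto
  ultimately show "connected_component_set S x \<subseteq> T"
    unfolding disjnt_def by blast
qed

lemma components_Un_clopen: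
  assumes "connected A" "connected B" "A \<noteq> {}" "B \<noteq> {}" "A \<inter> B = {}"
    and "openin (top_of_set (A \<union> B)) A" "closedin (top_of_set (A \<union> B)) A"
  shows "components (A \<union> B) = {A, B}"
proof -
  have B: "topspace (top_of_set (A \<union> B)) - A = B" using assms(5) by auto
  have "openin (top_of_set (A \<union> B)) B"
    using openin_diff[OF openin_topspace assms(7)] by (simp only: B)
  moreover have "closedin (top_of_set (A \<union> B)) B"
    using closedin_diff[OF closedin_topspace assms(6)] by (simp only: B)
  ultimately have "connected_component_set (A \<union> B) ` B = (\<lambda>_. B) ` B"
    using assms(2) by (intro image_cong refl connected_component_set_eq_clopen)
  moreover have "connected_component_set (A \<union> B) ` A = (\<lambda>_. A) ` A"
    using assms(1,6,7) by (intro image_cong refl connected_component_set_eq_clopen)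
  ultimately show ?thesis
    using assms(3,4) unfolding components_def image_Un by (simp add: image_constant_conv insert_commute)
qed

lemma open_Int_closure_Int_vimage_snd:
  fixes U :: "('a::topological_space \<times> 'b::topological_space) set"
  assumes "open U"
  shows "U \<inter> closure (U \<inter> snd -` P) = U \<inter> snd -` closure P"
proof -
  have "closure (snd -` P) = snd -` closure P"
    by (simp add: vimage_snd closure_Times)
  moreover have "U \<inter> closure (snd -` P) \<subseteq> closure (U \<inter> snd -` P)"
    using assms by (rule open_Int_closure_subset)
  moreover have "closure (U \<inter> snd -` P) \<subseteq> closure (snd -` P)"
    by (rule closure_mono) blast
  ultimately show ?thesis by blast
qed

lemma openin_Int_vimage_snd:
  "open V \<Longrightarrow> openin (top_of_set (W \<inter> snd -` S)) (W \<inter> snd -` (S \<inter> V))"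
  using openin_open_Int[OF open_vimage_snd, of V "W \<inter> snd -` S"] by (simp add: Int_assoc)

lemma closedin_Int_vimage_snd:
  "closed F \<Longrightarrow> closedin (top_of_set (W \<inter> snd -` S)) (W \<inter> snd -` (S \<inter> F))"
  using closedin_closed_Int[OF closed_vimage_snd, of F "W \<inter> snd -` S"] by (simp add: Int_assoc)

lemma mem_Ltil [simp]: "(z, a, r) \<in> Ltil \<longleftrightarrow> cmod z < r"
proof -
  have "cmod z < r \<Longrightarrow> 0 < r" using norm_ge_zero[of z] by linarith
  then show ?thesis unfolding Ltil_def by auto
qed

lemma Ltil_subset_vimage_snd: "Ltil \<subseteq> snd -` {p. 0 < snd p}"
  unfolding Ltil_def by auto

lemma open_Ltil: "open Ltil"
proof -
  have "x \<in> Ltil \<longleftrightarrow> cmod (fst x) < snd (snd x)" for x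
    by (cases x) simp
  then have Ltil_eq: "Ltil = {x. cmod (fst x) < snd (snd x)}" by blast
  show ?thesis
    unfolding Ltil_eq by (intro open_Collect_less continuous_intros)
qed

lemma connected_Ltil_Int_vimage_snd:
  assumes "connected P" "P \<subseteq> {p. 0 < snd p}"
  shows "connected (Ltil \<inter> snd -` P)"
proof -
  let ?f = "\<lambda>(w, a, r). (w * complex_of_real r, a, r)"
  have image: "Ltil \<inter> snd -` P = ?f ` (ball 0 1 \<times> P)"
  proof (intro equalityI subsetI)
    fix x assume "x \<in> Ltil \<inter> snd -` P"
    then obtain z a r where x: "x = (z, a, r)" "cmod z < r" "(a, r) \<in> P"
      by (cases x) auto
    then have "r > 0" using norm_ge_zero le_less_trans by blast
    then have "(z / complex_of_real r, a, r) \<in> ball 0 1 \<times> P"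
      using x by (simp add: norm_divide)
    moreover have "x = ?f (z / complex_of_real r, a, r)"
      using x \<open>r > 0\<close> by simp
    ultimately show "x \<in> ?f ` (ball 0 1 \<times> P)" by (rule rev_image_eqI)
  next
    fix x assume "x \<in> ?f ` (ball 0 1 \<times> P)"
    then obtain y where y: "y \<in> ball 0 1 \<times> P" "x = ?f y" by blast
    obtain w a r where "y = (w, a, r)" using prod_cases3 by blast
    then have "x = (w * complex_of_real r, a, r)" "cmod w < 1" "(a, r) \<in> P"
      using y by auto
    moreover have "r > 0" using assms(2) \<open>(a, r) \<in> P\<close> by auto
    ultimately show "x \<in> Ltil \<inter> snd -` P" by (simp add: norm_mult)
  qed
  have "continuous_on (ball 0 1 \<times> P) ?f"
    unfolding case_prod_beta by (intro continuous_intros)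
  moreover have "connected (ball (0::complex) 1 \<times> P)"
    using assms(1) by (simp add: connected_Times)
  ultimately show ?thesis
    unfolding image by (rule connected_continuous_image)
qed

lemma cos_pos_if_abs_less_pi_half: "\<bar>b\<bar> < pi / 2 \<Longrightarrow> 0 < cos b"
  by (intro cos_gt_zero_pi) auto

lemma abs_less_pi_half_if_cos_nonzero:
  assumes "\<bar>b\<bar> \<le> pi / 2" "cos b \<noteq> 0"
  shows "\<bar>b\<bar> < pi / 2"
proof (rule ccontr)
  assume "\<not> \<bar>b\<bar> < pi / 2"
  then have "b = pi / 2 \<or> b = - (pi / 2)" using assms(1) by linarith
  then show False using assms(2) by (metis cos_pi_half cos_minus)
qed

(* The branch r = sec(alpha + c), |alpha + c| < pi/2, of the secant curve and the regions on
   or above and on or below it; off the strip every point with r > 0 counts as below. *)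
definition Sec_eq :: "real \<Rightarrow> (real \<times> real) set" where
  "Sec_eq c = {(a, r). \<bar>a + c\<bar> < pi / 2 \<and> r * cos (a + c) = 1}"

definition Sec_ge :: "real \<Rightarrow> (real \<times> real) set" where
  "Sec_ge c = {(a, r). \<bar>a + c\<bar> < pi / 2 \<and> 1 \<le> r * cos (a + c)}"

definition Sec_gt :: "real \<Rightarrow> (real \<times> real) set" where
  "Sec_gt c = {(a, r). \<bar>a + c\<bar> < pi / 2 \<and> 1 < r * cos (a + c)}"

definition Sec_le :: "real \<Rightarrow> (real \<times> real) set" where
  "Sec_le c = {(a, r). 0 < r \<and> (\<bar>a + c\<bar> < pi / 2 \<longrightarrow> r * cos (a + c) \<le> 1)}"

definition Sec_lt :: "real \<Rightarrow> (real \<times> real) set" where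
  "Sec_lt c = {(a, r). 0 < r \<and> (\<bar>a + c\<bar> < pi / 2 \<longrightarrow> r * cos (a + c) < 1)}"

lemma Sec_ge_pos: "Sec_ge c \<subseteq> {p. 0 < snd p}"
proof clarify
  fix a r assume "(a, r) \<in> Sec_ge c"
  then have "0 < r * cos (a + c)" "0 < cos (a + c)"
    using cos_pos_if_abs_less_pi_half by (auto simp: Sec_ge_def)
  then show "0 < snd (a, r)" by (simp add: zero_less_mult_iff)
qed

lemma Sec_eq_subset_Sec_ge: "Sec_eq c \<subseteq> Sec_ge c"
  and Sec_gt_subset_Sec_ge: "Sec_gt c \<subseteq> Sec_ge c"
  unfolding Sec_eq_def Sec_gt_def Sec_ge_def by auto

lemma Sec_lt_pos: "Sec_lt c \<subseteq> {p. 0 < snd p}"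
  by (auto simp: Sec_lt_def)

lemma Sec_gt_pos: "Sec_gt c \<subseteq> {p. 0 < snd p}"
  using Sec_gt_subset_Sec_ge Sec_ge_pos by (rule order_trans)

lemma connected_above_secant:
  assumes "connected T"
  shows "connected {(a, r). \<bar>a + c\<bar> < pi / 2 \<and> r - 1 / cos (a + c) \<in> T}"
proof -
  let ?f = "\<lambda>(b, t). (b - c, 1 / cos b + t)"
  have image: "{(a, r). \<bar>a + c\<bar> < pi / 2 \<and> r - 1 / cos (a + c) \<in> T} = ?f ` ({-(pi/2)<..<pi/2} \<times> T)"
  proof (intro equalityI subsetI)
    fix p assume "p \<in> {(a, r). \<bar>a + c\<bar> < pi / 2 \<and> r - 1 / cos (a + c) \<in> T}"
    then obtain a r where p: "p = (a, r)" "\<bar>a + c\<bar> < pi / 2" "r - 1 / cos (a + c) \<in> T"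
      by blast
    then have "(a + c, r - 1 / cos (a + c)) \<in> {-(pi/2)<..<pi/2} \<times> T"
      by (simp only: abs_less_iff greaterThanLessThan_iff mem_Times_iff fst_conv snd_conv) auto
    moreover have "p = ?f (a + c, r - 1 / cos (a + c))" using p(1) by simp
    ultimately show "p \<in> ?f ` ({-(pi/2)<..<pi/2} \<times> T)" by (rule rev_image_eqI)
  qed (auto simp: abs_less_iff)
  have "continuous_on ({-(pi/2)<..<pi/2} \<times> T) ?f"
  proof -
    have "\<forall>b\<in>{-(pi/2)<..<pi/2}. cos b \<noteq> 0"
      using cos_gt_zero_pi by fastforce
    then show ?thesis
      unfolding case_prod_beta by (intro continuous_intros) auto
  qed
  moreover have "connected ({-(pi/2)<..<pi/2} \<times> T)"
    using assms by (simp add: connected_Times)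
  ultimately show ?thesis
    unfolding image by (rule connected_continuous_image)
qed

lemma Sec_eq_eq_graph:
  "Sec_eq c = {(a, r). \<bar>a + c\<bar> < pi / 2 \<and> r - 1 / cos (a + c) \<in> {0}}"
  and Sec_ge_eq_graph:
  "Sec_ge c = {(a, r). \<bar>a + c\<bar> < pi / 2 \<and> r - 1 / cos (a + c) \<in> {0..}}"
  and Sec_gt_eq_graph:
  "Sec_gt c = {(a, r). \<bar>a + c\<bar> < pi / 2 \<and> r - 1 / cos (a + c) \<in> {0<..}}"
  unfolding Sec_eq_def Sec_ge_def Sec_gt_def
  by (auto simp: cos_pos_if_abs_less_pi_half cos_pos_if_abs_less_pi_half[THEN dual_order.strict_implies_not_eq]
      pos_divide_le_eq pos_divide_less_eq eq_divide_eq)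

lemma connected_Sec_eq: "connected (Sec_eq c)"
  and connected_Sec_ge: "connected (Sec_ge c)"
  and connected_Sec_gt: "connected (Sec_gt c)"
  unfolding Sec_eq_eq_graph Sec_ge_eq_graph Sec_gt_eq_graph
  by (intro connected_above_secant; simp)+

lemma Sec_lt_downward_closed:
  assumes "(a, r) \<in> Sec_lt c" "0 < s" "s \<le> r"
  shows "(a, s) \<in> Sec_lt c"
proof -
  have "s * cos (a + c) < 1" if "\<bar>a + c\<bar> < pi / 2"
  proof -
    have "s * cos (a + c) \<le> r * cos (a + c)"
      using assms(3) cos_pos_if_abs_less_pi_half[OF that] by (intro mult_right_mono) auto
    then show ?thesis using assms(1) that by (simp add: Sec_lt_def)
  qed
  then show ?thesis
    unfolding Sec_lt_def mem_Collect_eq prod.case using assms(2) by blast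
qed

lemma connected_Sec_lt: "connected (Sec_lt c)"
proof -
  let ?strip = "(UNIV :: real set) \<times> {0<..<1::real}"
  let ?seg = "\<lambda>p. {fst p} \<times> {0<..snd p}"
  have strip: "(a, r) \<in> Sec_lt c" if r: "0 < r" "r < 1" for a r
  proof -
    have "r * cos (a + c) \<le> r" using mult_left_le[OF cos_le_one, of r] r(1) by simp
    then have "r * cos (a + c) < 1" using r(2) by linarith
    then show "(a, r) \<in> Sec_lt c" using r(1) by (simp add: Sec_lt_def)
  qed
  have "Sec_lt c = ?strip \<union> \<Union>(?seg ` Sec_lt c)"
  proof (intro equalityI subsetI)
    fix p assume p: "p \<in> Sec_lt c"
    then have "p \<in> ?seg p" by (cases p) (simp add: Sec_lt_def)
    then show "p \<in> ?strip \<union> \<Union>(?seg ` Sec_lt c)" using p by (intro UnI2 UN_I)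
  next
    fix p assume "p \<in> ?strip \<union> \<Union>(?seg ` Sec_lt c)"
    then show "p \<in> Sec_lt c"
    proof
      assume "p \<in> ?strip"
      then show ?thesis using strip by (cases p) simp
    next
      assume "p \<in> \<Union>(?seg ` Sec_lt c)"
      then obtain q where "q \<in> Sec_lt c" "p \<in> ?seg q" by blast
      then show ?thesis using Sec_lt_downward_closed by (cases p, cases q) simp
    qed
  qed
  moreover have "connected (?strip \<union> \<Union>(?seg ` Sec_lt c))"
  proof (rule connected_Un_UN)
    show "connected ?strip" by (simp add: connected_Times)
  next
    fix X assume "X \<in> ?seg ` Sec_lt c"
    then obtain p where p: "p \<in> Sec_lt c" "X = ?seg p" by blast
    then show "connected X" by (simp add: connected_Times)
    have "0 < snd p" using p(1) by (cases p) (simp add: Sec_lt_def)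
    then have "(fst p, min (snd p) (1/2)) \<in> ?strip \<inter> X"
      using p(2) by simp
    then show "?strip \<inter> X \<noteq> {}" by blast
  qed
  ultimately show ?thesis by simp
qed

lemma open_Sec_gt: "open (Sec_gt c)"
proof -
  have "Sec_gt c = {p. \<bar>fst p + c\<bar> < pi / 2} \<inter> {p. 1 < snd p * cos (fst p + c)}"
    by (auto simp: Sec_gt_def)
  then show ?thesis
    by (simp only:) (intro open_Int open_Collect_less continuous_intros)
qed

lemma closed_Sec_ge: "closed (Sec_ge c)"
proof -
  have "Sec_ge c = {p. \<bar>fst p + c\<bar> \<le> pi / 2} \<inter> {p. 1 \<le> snd p * cos (fst p + c)}"
  proof (intro equalityI subsetI)
    fix p assume "p \<in> Sec_ge c"
    then show "p \<in> {p. \<bar>fst p + c\<bar> \<le> pi / 2} \<inter> {p. 1 \<le> snd p * cos (fst p + c)}"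
      by (cases p) (simp add: Sec_ge_def)
  next
    fix p assume p: "p \<in> {p. \<bar>fst p + c\<bar> \<le> pi / 2} \<inter> {p. 1 \<le> snd p * cos (fst p + c)}"
    then have "\<bar>fst p + c\<bar> < pi / 2"
      by (intro abs_less_pi_half_if_cos_nonzero) auto
    with p show "p \<in> Sec_ge c" by (cases p) (simp add: Sec_ge_def)
  qed
  then show ?thesis
    by (simp only:) (intro closed_Int closed_Collect_le continuous_intros)
qed

lemma closure_Sec_gt: "closure (Sec_gt c) = Sec_ge c"
proof
  show "closure (Sec_gt c) \<subseteq> Sec_ge c"
    by (intro closure_minimal Sec_gt_subset_Sec_ge closed_Sec_ge)
  show "Sec_ge c \<subseteq> closure (Sec_gt c)"
  proof clarify
    fix a r assume ar: "(a, r) \<in> Sec_ge c"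
    have "(a, s) \<in> Sec_gt c" if "r < s" for s
    proof -
      have "r * cos (a + c) < s * cos (a + c)"
        using that ar cos_pos_if_abs_less_pi_half
        by (intro mult_strict_right_mono) (auto simp: Sec_ge_def)
      then show ?thesis using ar by (simp add: Sec_ge_def Sec_gt_def)
    qed
    then have "{a} \<times> {r<..} \<subseteq> Sec_gt c" by auto
    then have "closure ({a} \<times> {r<..}) \<subseteq> closure (Sec_gt c)" by (rule closure_mono)
    then show "(a, r) \<in> closure (Sec_gt c)" by (auto simp: closure_Times)
  qed
qed

lemma closure_Sec_lt_Int_pos: "closure (Sec_lt c) \<inter> {p. 0 < snd p} = Sec_le c"
proof
  have "closure (Sec_lt c) \<subseteq> - Sec_gt c"
    by (intro closure_minimal closed_Compl open_Sec_gt) (auto simp: Sec_lt_def Sec_gt_def)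
  then show "closure (Sec_lt c) \<inter> {p. 0 < snd p} \<subseteq> Sec_le c"
    by (auto simp: Sec_gt_def Sec_le_def)
  show "Sec_le c \<subseteq> closure (Sec_lt c) \<inter> {p. 0 < snd p}"
  proof
    fix p assume "p \<in> Sec_le c"
    moreover obtain a r where p: "p = (a, r)" by (cases p)
    ultimately have ar: "(a, r) \<in> Sec_le c" by simp
    have "(a, s) \<in> Sec_lt c" if s: "0 < s" "s < r" for s
    proof -
      have "s * cos (a + c) < 1" if "\<bar>a + c\<bar> < pi / 2"
      proof -
        have "s * cos (a + c) < r * cos (a + c)"
          using s(2) cos_pos_if_abs_less_pi_half[OF that] by (rule mult_strict_right_mono)
        then show ?thesis using ar that by (simp add: Sec_le_def)
      qed
      then show ?thesis using s(1) by (simp add: Sec_lt_def)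
    qed
    then have "{a} \<times> {0<..<r} \<subseteq> Sec_lt c" by auto
    then have "closure ({a} \<times> {0<..<r}) \<subseteq> closure (Sec_lt c)" by (rule closure_mono)
    moreover have "0 < r" using ar by (simp add: Sec_le_def)
    ultimately show "p \<in> closure (Sec_lt c) \<inter> {p. 0 < snd p}"
      using p by (auto simp: closure_Times)
  qed
qed

lemma bform_piL_rotation:
  "bform (piL (0, -c, 1)) (piL (z, a, r)) = - (r * cos (a + c))"
  by (simp add: bform_def piL_def cis_cnj cos_add algebra_simps)

lemma Ltil_subset_vimage_Lset: "Ltil \<subseteq> piL -` Lset"
  by (auto simp: Ltil_def Lset_def piL_def norm_mult)

lemma Ltil_Int_vimage_Ebar_rotation:
  "Ltil \<inter> piL -` Ebar (piL (0, -c, 1)) = Ltil \<inter> snd -` {(a, r). r * cos (a + c) = 1}"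
  using Ltil_subset_vimage_Lset by (auto simp: Ebar_def bform_piL_rotation)

lemma Ltil_Int_vimage_Ibar_rotation:
  "Ltil \<inter> piL -` Ibar (piL (0, -c, 1)) = Ltil \<inter> snd -` {(a, r). 1 \<le> r * cos (a + c)}"
  using Ltil_subset_vimage_Lset by (auto simp: Ibar_def bform_piL_rotation)

(* L avoids the boundary lines of the strip V, where cos vanishes, so the part of L over V is
   clopen in L. *)
lemma connected_component_Ltil_principal_branch:
  fixes L :: "(real \<times> real) set" and c :: real
  defines "V \<equiv> {p. \<bar>fst p + c\<bar> < pi / 2}"
  assumes "connected (L \<inter> V)" "L \<inter> V \<subseteq> {p. 0 < snd p}" "(-c, 1) \<in> L"
    and "\<And>a r. (a, r) \<in> L \<Longrightarrow> cos (a + c) \<noteq> 0"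
  shows "connected_component_set (Ltil \<inter> snd -` L) (0, -c, 1) = Ltil \<inter> snd -` (L \<inter> V)"
proof (rule connected_component_set_eq_clopen)
  show "connected (Ltil \<inter> snd -` (L \<inter> V))"
    using assms(2,3) by (rule connected_Ltil_Int_vimage_snd)
  show "(0, -c, 1) \<in> Ltil \<inter> snd -` (L \<inter> V)"
    using assms(4) by (simp add: V_def)
  show "openin (top_of_set (Ltil \<inter> snd -` L)) (Ltil \<inter> snd -` (L \<inter> V))"
    unfolding V_def by (intro openin_Int_vimage_snd open_Collect_less continuous_intros)
  let ?F = "{p. \<bar>fst p + c\<bar> \<le> pi / 2}"
  have "L \<inter> ?F \<subseteq> V"
  proof
    fix p assume "p \<in> L \<inter> ?F"
    then have "\<bar>fst p + c\<bar> \<le> pi / 2" "cos (fst p + c) \<noteq> 0"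
      using assms(5)[of "fst p" "snd p"] by auto
    then show "p \<in> V" unfolding V_def mem_Collect_eq by (rule abs_less_pi_half_if_cos_nonzero)
  qed
  then have "L \<inter> V = L \<inter> ?F" unfolding V_def by auto
  moreover have "closedin (top_of_set (Ltil \<inter> snd -` L)) (Ltil \<inter> snd -` (L \<inter> ?F))"
    by (intro closedin_Int_vimage_snd closed_Collect_le continuous_intros)
  ultimately show "closedin (top_of_set (Ltil \<inter> snd -` L)) (Ltil \<inter> snd -` (L \<inter> V))"
    by simp
qed

lemma Eset_rotation: "Eset (0, -c, 1) = Ltil \<inter> snd -` Sec_eq c"
proof -
  let ?L = "{(a, r). r * cos (a + c) = 1}"
  have eq: "?L \<inter> {p. \<bar>fst p + c\<bar> < pi / 2} = Sec_eq c"
    by (auto simp: Sec_eq_def)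
  have "connected_component_set (Ltil \<inter> snd -` ?L) (0, -c, 1)
      = Ltil \<inter> snd -` (?L \<inter> {p. \<bar>fst p + c\<bar> < pi / 2})"
  proof (rule connected_component_Ltil_principal_branch, unfold eq)
    show "Sec_eq c \<subseteq> {p. 0 < snd p}"
      using Sec_eq_subset_Sec_ge Sec_ge_pos by blast
  qed (auto intro: connected_Sec_eq)
  then show ?thesis
    unfolding Eset_def Ltil_Int_vimage_Ebar_rotation eq .
qed

lemma Iset_rotation: "Iset (0, -c, 1) = Ltil \<inter> snd -` Sec_ge c"
proof -
  let ?L = "{(a, r). 1 \<le> r * cos (a + c)}"
  have eq: "?L \<inter> {p. \<bar>fst p + c\<bar> < pi / 2} = Sec_ge c"
    by (auto simp: Sec_ge_def)
  have "connected_component_set (Ltil \<inter> snd -` ?L) (0, -c, 1)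
      = Ltil \<inter> snd -` (?L \<inter> {p. \<bar>fst p + c\<bar> < pi / 2})"
  proof (rule connected_component_Ltil_principal_branch, unfold eq)
    show "Sec_ge c \<subseteq> {p. 0 < snd p}"
      by (rule Sec_ge_pos)
  qed (auto intro: connected_Sec_ge)
  then show ?thesis
    unfolding Iset_def Ltil_Int_vimage_Ibar_rotation eq .
qed

lemma Ltil_minus_Eset_rotation:
  "Ltil - Eset (0, -c, 1) = Ltil \<inter> snd -` (Sec_gt c \<union> Sec_lt c)"
proof (rule set_eqI)
  fix x :: "complex \<times> real \<times> real"
  obtain z a r where x: "x = (z, a, r)" by (cases x)
  have "cmod z < r \<Longrightarrow> 0 < r" using norm_ge_zero[of z] by linarith
  then show "x \<in> Ltil - Eset (0, -c, 1) \<longleftrightarrow> x \<in> Ltil \<inter> snd -` (Sec_gt c \<union> Sec_lt c)"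
    unfolding x by (auto simp: Eset_rotation Sec_eq_def Sec_gt_def Sec_lt_def)
qed

lemma components_Ltil_minus_Eset_rotation:
  "components (Ltil - Eset (0, -c, 1)) = {Ltil \<inter> snd -` Sec_gt c, Ltil \<inter> snd -` Sec_lt c}"
proof -
  let ?S = "Sec_gt c \<union> Sec_lt c"
  have "components (Ltil \<inter> snd -` Sec_gt c \<union> Ltil \<inter> snd -` Sec_lt c)
      = {Ltil \<inter> snd -` Sec_gt c, Ltil \<inter> snd -` Sec_lt c}"
  proof (rule components_Un_clopen)
    show "connected (Ltil \<inter> snd -` Sec_gt c)"
      using connected_Sec_gt Sec_gt_pos by (rule connected_Ltil_Int_vimage_snd)
    show "connected (Ltil \<inter> snd -` Sec_lt c)"
      using connected_Sec_lt Sec_lt_pos by (rule connected_Ltil_Int_vimage_snd)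
    have "(0, -c, 2) \<in> Ltil \<inter> snd -` Sec_gt c" by (simp add: Sec_gt_def)
    then show "Ltil \<inter> snd -` Sec_gt c \<noteq> {}" by blast
    have "(0, pi - c, 1) \<in> Ltil \<inter> snd -` Sec_lt c" by (simp add: Sec_lt_def)
    then show "Ltil \<inter> snd -` Sec_lt c \<noteq> {}" by blast
    show "(Ltil \<inter> snd -` Sec_gt c) \<inter> (Ltil \<inter> snd -` Sec_lt c) = {}"
      by (auto simp: Sec_gt_def Sec_lt_def)
    have gt: "?S \<inter> Sec_gt c = Sec_gt c" and ge: "?S \<inter> Sec_ge c = Sec_gt c"
      by (auto simp: Sec_gt_def Sec_lt_def Sec_ge_def)
    have U: "Ltil \<inter> snd -` Sec_gt c \<union> Ltil \<inter> snd -` Sec_lt c = Ltil \<inter> snd -` ?S"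
      by blast
    show "openin (top_of_set (Ltil \<inter> snd -` Sec_gt c \<union> Ltil \<inter> snd -` Sec_lt c))
        (Ltil \<inter> snd -` Sec_gt c)"
      using openin_Int_vimage_snd[OF open_Sec_gt[of c], of Ltil ?S] unfolding U gt .
    show "closedin (top_of_set (Ltil \<inter> snd -` Sec_gt c \<union> Ltil \<inter> snd -` Sec_lt c))
        (Ltil \<inter> snd -` Sec_gt c)"
      using closedin_Int_vimage_snd[OF closed_Sec_ge[of c], of Ltil ?S] unfolding U ge .
  qed
  moreover have "Ltil \<inter> snd -` Sec_gt c \<union> Ltil \<inter> snd -` Sec_lt c = Ltil - Eset (0, -c, 1)"
    unfolding Ltil_minus_Eset_rotation by blast
  ultimately show ?thesis by simp
qed

lemma Ltil_Int_closure_Sec_gt: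
  "Ltil \<inter> closure (Ltil \<inter> snd -` Sec_gt c) = Ltil \<inter> snd -` Sec_ge c"
  by (simp add: open_Int_closure_Int_vimage_snd open_Ltil closure_Sec_gt)

lemma Ltil_Int_closure_Sec_lt:
  "Ltil \<inter> closure (Ltil \<inter> snd -` Sec_lt c) = Ltil \<inter> snd -` Sec_le c"
  using open_Int_closure_Int_vimage_snd[OF open_Ltil] closure_Sec_lt_Int_pos[of c]
    Ltil_subset_vimage_snd
  by blast

lemma Hset_rotation: "Hset (0, -c, 1) = Ltil \<inter> snd -` Sec_le c"
proof -
  define A B where "A = Ltil \<inter> snd -` Sec_gt c" and "B = Ltil \<inter> snd -` Sec_lt c"
  define H I where "H = Ltil \<inter> snd -` Sec_le c" and "I = Ltil \<inter> snd -` Sec_ge c"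
  have "(0, pi - c, 1) \<in> H - I"
    by (simp add: H_def I_def Sec_le_def Sec_ge_def)
  then have "H \<noteq> I" by blast
  moreover have "Ltil \<inter> closure A = I" "Ltil \<inter> closure B = H"
    unfolding A_def B_def H_def I_def by (rule Ltil_Int_closure_Sec_gt Ltil_Int_closure_Sec_lt)+
  moreover have "components (Ltil - Eset (0, -c, 1)) = {A, B}" "Iset (0, -c, 1) = I"
    unfolding A_def B_def I_def by (rule components_Ltil_minus_Eset_rotation Iset_rotation)+
  ultimately have "{Ltil \<inter> closure C | C. C \<in> components (Ltil - Eset (0, -c, 1))
      \<and> Ltil \<inter> closure C \<noteq> Iset (0, -c, 1)} = {H}"
    by auto
  then show ?thesis
    unfolding Hset_def H_def by simp
qed

lemma tau_pow_image_Xe: "tau_pow th m ` Xe = Sec_le (of_int m * th)"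
proof (intro equalityI subsetI)
  fix p assume "p \<in> tau_pow th m ` Xe"
  then obtain b r where "(b, r) \<in> Xe" "p = (b - of_int m * th, r)"
    by (auto simp: tau_pow_def)
  then show "p \<in> Sec_le (of_int m * th)"
    by (auto simp: Xe_def Sec_le_def)
next
  fix p assume p: "p \<in> Sec_le (of_int m * th)"
  obtain a r where a: "p = (a, r)" by (cases p)
  have "(a + of_int m * th, r) \<in> Xe"
    using p unfolding a by (auto simp: Xe_def Sec_le_def)
  moreover have "p = tau_pow th m (a + of_int m * th, r)"
    unfolding a by (simp add: tau_pow_def)
  ultimately show "p \<in> tau_pow th m ` Xe" by (rule rev_image_eqI)
qed

lemma Xu_eq: "Xu th = (\<Inter>m::int. Sec_le (of_int m * th))"
  unfolding Xu_def tau_pow_image_Xe ..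

lemma Qu_eq: "Qu th = (UNIV \<times> Xu th) \<inter> Ltil"
proof -
  have "rd_pow th m eG = (0, - (of_int m * th), 1)" for m
    by (simp add: rd_pow_def eG_def)
  then have "Qu th = (\<Inter>m::int. Ltil \<inter> snd -` Sec_le (of_int m * th))"
    by (simp add: Qu_def Hset_rotation)
  also have "\<dots> = Ltil \<inter> snd -` Xu th"
    unfolding Xu_eq by blast
  finally show ?thesis
    by (simp add: vimage_snd Int_commute)
qed

lemma exists_int_shift_abs_le_half:
  fixes a th :: real
  assumes "0 < th"
  shows "\<exists>m::int. \<bar>a + of_int m * th\<bar> \<le> th / 2"
proof
  let ?m = "round (- a / th)"
  have "\<bar>a + of_int ?m * th\<bar> = th * \<bar>of_int ?m - (- a / th)\<bar>"
    using assms by (simp add: field_simps abs_mult)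
  also have "\<dots> \<le> th * (1 / 2)"
    using assms by (intro mult_left_mono[OF of_int_round_abs_le]) auto
  finally show "\<bar>a + of_int ?m * th\<bar> \<le> th / 2" by simp
qed

lemma Xu_bound:
  assumes "0 < th" "th < pi" "(a, r) \<in> Xu th"
  shows "r \<le> 1 / cos (th / 2)"
proof -
  obtain m :: int where m: "\<bar>a + of_int m * th\<bar> \<le> th / 2"
    using exists_int_shift_abs_le_half assms(1) by blast
  define b where "b = a + of_int m * th"
  have "(a, r) \<in> Sec_le (of_int m * th)"
    using assms(3) unfolding Xu_eq by blast
  moreover have "\<bar>b\<bar> < pi / 2" using m assms(2) unfolding b_def by linarith
  ultimately have "0 < r" "r * cos b \<le> 1"
    by (auto simp: Sec_le_def b_def)
  moreover have "cos (th / 2) \<le> cos b"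
    using m assms(1,2) unfolding b_def cos_abs_real[symmetric, of "a + of_int m * th"]
    by (intro cos_monotone_0_pi_le) auto
  ultimately have "r * cos (th / 2) \<le> 1"
    by (meson mult_left_mono order_trans less_imp_le)
  moreover have "0 < cos (th / 2)"
    using assms(1,2) by (intro cos_gt_zero_pi) auto
  ultimately show ?thesis
    by (simp add: pos_le_divide_eq)
qed

theorem mainTheorem1:
  fixes k p :: nat and th :: real
  assumes "0 < k" and "k < p"
    and "th = pi * real k / real p"
  shows "Qu th = (UNIV \<times> Xu th) \<inter> Ltil
    \<and> (\<forall>z a r. (z, a, r) \<in> Qu th \<longrightarrow> r \<le> 1 / cos (th / 2))"
proof
  show Qu: "Qu th = (UNIV \<times> Xu th) \<inter> Ltil"
    by (rule Qu_eq)
  have q: "0 < real k / real p" "real k / real p < 1"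
    using assms(1,2) by simp_all
  moreover have "th = pi * (real k / real p)"
    using assms(3) by simp
  ultimately have "0 < th" "th < pi"
    using mult_pos_pos[OF pi_gt_zero q(1)] mult_strict_left_mono[OF q(2) pi_gt_zero] by simp_all
  then show "\<forall>z a r. (z, a, r) \<in> Qu th \<longrightarrow> r \<le> 1 / cos (th / 2)"
    unfolding Qu using Xu_bound by blast
qed

end
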